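(* Consider an execution of \textsf{Contagion} (described in the context) in which the sender $\sigma$ is correct and broadcasts $m$. If in this execution the underlying $pcb$ satisfies total validity (every correct process eventually $pcb$-delivers $m$) and $\sigma$ has no more than $D-\hat D$ Byzantine entries in its delivery sample, then \textsf{Contagion} satisfies validity in this execution, i.e., $\sigma$ eventually delivers $m$.
   Context: System model: a fixed set $\Pi$ of processes, some Byzantine and the rest correct, asynchronous reliable authenticated links (messages between correct processes are eventually delivered); signatures cannot be forged. $pcb$ is a probabilistic consistent broadcast instance with sender $\sigma$. \textsf{Contagion} (parameters $R,\hat R,D,\hat D$): each correct process draws a ready sample of $R$ and a delivery sample of $D$ entries, each uniformly from $\Pi$ with replacement, and sends ReadySubscribe to each, recording its own subscribers. To broadcast $m$, $\sigma$ $pcb$-broadcasts $(m,\mathrm{sign}_\sigma(m))$. Upon $pcb$-delivering a correctly signed pair, a correct process becomes ready for it and sends Ready for it to all current and future subscribers. Only correctly signed Ready messages are accepted, recorded separately for senders in the ready sample and in the delivery sample. When at least $\hat R$ members of its ready sample have sent Ready for a pair, a correct process becomes ready for it and sends Ready for it to its subscribers. A correct process delivers (at most once) the message of the first pair for which at least $\hat D$ members of its delivery sample have sent Ready. *)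

theory Defs
  imports Main
begin

text \<open>
  Abstract model of one execution of Contagion (one broadcast instance with
  sender sigma).  Time is discrete (nat); all "so far" quantities are
  cumulative sets indexed by time.

  - Correct :: set of correct processes (the others are Byzantine); Pi = UNIV.
  - rs p, ds p :: ready / delivery sample of p (lists, i.e. with replacement).
  - sent p q t :: messages sent by p to q up to time t.
  - rcvd q p t :: messages received (accepted) by q from p up to time t.
  - pcbd p t :: pairs (message, signature) pcb-delivered by p up to time t.
  - dlv p t :: message delivered by p up to time t (None = nothing yet).
  - vrf m s :: s is a correct signature of sigma on m.
\<close>

datatype ('m, 's) cmsg = ReadySubscribe | Ready "'m \<times> 's"

definition subscribers ::
  "('p \<Rightarrow> 'p \<Rightarrow> nat \<Rightarrow> ('m,'s) cmsg set) \<Rightarrow> 'p \<Rightarrow> nat \<Rightarrow> 'p set" where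
  "subscribers rcvd p t = {q. ReadySubscribe \<in> rcvd p q t}"

definition ready_count ::
  "('p \<Rightarrow> 'p \<Rightarrow> nat \<Rightarrow> ('m,'s) cmsg set) \<Rightarrow> 'p list \<Rightarrow> 'p \<Rightarrow> 'm \<times> 's \<Rightarrow> nat \<Rightarrow> nat" where
  "ready_count rcvd smp p pr t = card {i. i < length smp \<and> Ready pr \<in> rcvd p (smp ! i) t}"

definition ready_set ::
  "('m \<Rightarrow> 's \<Rightarrow> bool) \<Rightarrow> nat \<Rightarrow> ('p \<Rightarrow> 'p list) \<Rightarrow> ('p \<Rightarrow> nat \<Rightarrow> ('m \<times> 's) set)
   \<Rightarrow> ('p \<Rightarrow> 'p \<Rightarrow> nat \<Rightarrow> ('m,'s) cmsg set) \<Rightarrow> 'p \<Rightarrow> nat \<Rightarrow> ('m \<times> 's) set" where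
  "ready_set vrf Rh rs pcbd rcvd p t =
     {pr. vrf (fst pr) (snd pr) \<and> (pr \<in> pcbd p t \<or> Rh \<le> ready_count rcvd (rs p) p pr t)}"

text \<open>Asynchronous reliable authenticated links, cumulative histories.\<close>
definition network_ok ::
  "'p set \<Rightarrow> ('p \<Rightarrow> 'p \<Rightarrow> nat \<Rightarrow> ('m,'s) cmsg set) \<Rightarrow> ('p \<Rightarrow> 'p \<Rightarrow> nat \<Rightarrow> ('m,'s) cmsg set)
   \<Rightarrow> ('p \<Rightarrow> nat \<Rightarrow> ('m \<times> 's) set) \<Rightarrow> bool" where
  "network_ok Correct sent rcvd pcbd \<longleftrightarrow>
     (\<forall>p q t. sent p q t \<subseteq> sent p q (Suc t)) \<and>
     (\<forall>p q t. rcvd p q t \<subseteq> rcvd p q (Suc t)) \<and>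
     (\<forall>p t. pcbd p t \<subseteq> pcbd p (Suc t)) \<and>
     (\<forall>p q x t. p \<in> Correct \<longrightarrow> q \<in> Correct \<longrightarrow> x \<in> sent p q t \<longrightarrow>
        (\<exists>t'. x \<in> rcvd q p t')) \<and>
     (\<forall>p q x t. p \<in> Correct \<longrightarrow> q \<in> Correct \<longrightarrow> x \<in> rcvd q p t \<longrightarrow>
        (\<exists>t'\<le>t. x \<in> sent p q t'))"

definition contagion_proc ::
  "nat \<Rightarrow> nat \<Rightarrow> nat \<Rightarrow> nat \<Rightarrow> ('m \<Rightarrow> 's \<Rightarrow> bool) \<Rightarrow> ('p \<Rightarrow> 'p list) \<Rightarrow> ('p \<Rightarrow> 'p list)
   \<Rightarrow> ('p \<Rightarrow> 'p \<Rightarrow> nat \<Rightarrow> ('m,'s) cmsg set) \<Rightarrow> ('p \<Rightarrow> 'p \<Rightarrow> nat \<Rightarrow> ('m,'s) cmsg set)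
   \<Rightarrow> ('p \<Rightarrow> nat \<Rightarrow> ('m \<times> 's) set) \<Rightarrow> ('p \<Rightarrow> nat \<Rightarrow> 'm option) \<Rightarrow> 'p \<Rightarrow> bool" where
  "contagion_proc R Rh D Dh vrf rs ds sent rcvd pcbd dlv p \<longleftrightarrow>
     length (rs p) = R \<and> length (ds p) = D \<and>
     \<comment> \<open>ReadySubscribe is sent to every sample member, and only to them\<close>
     (\<forall>q \<in> set (rs p) \<union> set (ds p). \<exists>t. ReadySubscribe \<in> sent p q t) \<and>
     (\<forall>q t. ReadySubscribe \<in> sent p q t \<longrightarrow> q \<in> set (rs p) \<union> set (ds p)) \<and>
     \<comment> \<open>Ready for a pair is sent to all current and future subscribers once ready\<close>
     (\<forall>pr t q t'. pr \<in> ready_set vrf Rh rs pcbd rcvd p t \<longrightarrow> q \<in> subscribers rcvd p t' \<longrightarrow>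
        (\<exists>t''. Ready pr \<in> sent p q t'')) \<and>
     (\<forall>pr q t. Ready pr \<in> sent p q t \<longrightarrow>
        pr \<in> ready_set vrf Rh rs pcbd rcvd p t \<and> q \<in> subscribers rcvd p t) \<and>
     \<comment> \<open>delivery: at most once, of the first correctly signed pair reaching Dh\<close>
     (\<forall>t x. dlv p t = Some x \<longrightarrow> dlv p (Suc t) = Some x) \<and>
     (\<forall>x. dlv p 0 = Some x \<longrightarrow>
        (\<exists>s. vrf x s \<and> Dh \<le> ready_count rcvd (ds p) p (x, s) 0)) \<and>
     (\<forall>t x. dlv p t = None \<longrightarrow> dlv p (Suc t) = Some x \<longrightarrow>
        (\<exists>s. vrf x s \<and> Dh \<le> ready_count rcvd (ds p) p (x, s) (Suc t))) \<and>
     (\<forall>pr t. vrf (fst pr) (snd pr) \<longrightarrow> Dh \<le> ready_count rcvd (ds p) p pr t \<longrightarrow> dlv p t \<noteq> None)"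

end

theory Submission
  imports Defs
begin

text \<open>
  Every correct member q of the sender's delivery sample subscribed to the sender's
  Ready messages; by total validity q pcb-delivers (m, sign m), becomes ready for it
  and sends Ready to the sender, which eventually receives it. As the histories are
  cumulative, at some common time the sender has Ready from all correct entries of
  its delivery sample, which are at least D - (D - Dh) = Dh many, so it has delivered
  something by then. By unforgeability every correctly signed pair carries m, so
  what it delivered is m.
\<close>

lemma finite_eventually_all:
  fixes P :: "'a \<Rightarrow> nat \<Rightarrow> bool"
  assumes "finite S"
    and eventually: "\<forall>q \<in> S. \<exists>t. P q t"
    and mono: "\<And>q t t'. P q t \<Longrightarrow> t \<le> t' \<Longrightarrow> P q t'"
  shows "\<exists>T. \<forall>q \<in> S. P q T"
proof -
  obtain f where f: "\<forall>q \<in> S. P q (f q)"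
    using eventually by metis
  have "P q (sum f S)" if "q \<in> S" for q
    using f that mono member_le_sum[OF _ _ \<open>finite S\<close>] by blast
  then show ?thesis by blast
qed

lemma network_ok_rcvd_mono:
  assumes "network_ok Correct sent rcvd pcbd" "t \<le> t'"
  shows "rcvd p q t \<subseteq> rcvd p q t'"
proof (rule lift_Suc_mono_le[of "rcvd p q"])
  show "rcvd p q n \<subseteq> rcvd p q (Suc n)" for n
    using assms(1) unfolding network_ok_def by meson
qed (fact assms(2))

lemma network_ok_reliable:
  assumes "network_ok Correct sent rcvd pcbd" "p \<in> Correct" "q \<in> Correct"
    and "x \<in> sent p q t"
  shows "\<exists>t'. x \<in> rcvd q p t'"
  using assms unfolding network_ok_def by meson

lemma contagion_proc_delivered_signed:
  assumes proc: "contagion_proc R Rh D Dh vrf rs ds sent rcvd pcbd dlv p"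
  shows "dlv p t = Some x \<Longrightarrow> \<exists>s. vrf x s"
proof (induction t arbitrary: x)
  case 0
  then show ?case using proc unfolding contagion_proc_def by meson
next
  case (Suc t)
  show ?case
  proof (cases "dlv p t")
    case None
    with Suc.prems show ?thesis using proc unfolding contagion_proc_def by meson
  next
    case (Some y)
    then have "dlv p (Suc t) = Some y"
      using proc unfolding contagion_proc_def by meson
    then show ?thesis using Suc Some by simp
  qed
qed

lemma contagion_proc_delivers_at_threshold:
  assumes "contagion_proc R Rh D Dh vrf rs ds sent rcvd pcbd dlv p"
    and "vrf x s" "Dh \<le> ready_count rcvd (ds p) p (x, s) t"
  shows "dlv p t \<noteq> None"
  using assms unfolding contagion_proc_def by (metis fst_conv snd_conv)

lemma contagion_proc_subscribes:
  assumes "contagion_proc R Rh D Dh vrf rs ds sent rcvd pcbd dlv p"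
    and "q \<in> set (rs p) \<union> set (ds p)"
  shows "\<exists>t. ReadySubscribe \<in> sent p q t"
  using assms unfolding contagion_proc_def by blast

lemma contagion_proc_sends_ready:
  assumes "contagion_proc R Rh D Dh vrf rs ds sent rcvd pcbd dlv p"
    and "pr \<in> ready_set vrf Rh rs pcbd rcvd p t" "q \<in> subscribers rcvd p t'"
  shows "\<exists>t''. Ready pr \<in> sent p q t''"
  using assms unfolding contagion_proc_def by blast

lemma ready_reaches_sampler:
  assumes net: "network_ok Correct sent rcvd pcbd"
    and proc: "\<forall>p \<in> Correct. contagion_proc R Rh D Dh vrf rs ds sent rcvd pcbd dlv p"
    and p: "p \<in> Correct" and q: "q \<in> Correct" "q \<in> set (rs p) \<union> set (ds p)"
    and signed: "vrf (fst pr) (snd pr)" and pcb: "pr \<in> pcbd q t"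
  shows "\<exists>t'. Ready pr \<in> rcvd p q t'"
proof -
  obtain t0 where "ReadySubscribe \<in> sent p q t0"
    using contagion_proc_subscribes[OF proc[rule_format, OF p] q(2)] by blast
  then obtain t1 where "ReadySubscribe \<in> rcvd q p t1"
    using network_ok_reliable[OF net p q(1)] by blast
  then have "p \<in> subscribers rcvd q t1"
    unfolding subscribers_def by simp
  moreover have "pr \<in> ready_set vrf Rh rs pcbd rcvd q t"
    unfolding ready_set_def using signed pcb by simp
  ultimately obtain t2 where "Ready pr \<in> sent q p t2"
    using contagion_proc_sends_ready[OF proc[rule_format, OF q(1)]] by blast
  then show ?thesis
    using network_ok_reliable[OF net q(1) p] by blast
qed

lemma ready_count_ge_length_filter:
  assumes "\<forall>q \<in> set smp. P q \<longrightarrow> Ready pr \<in> rcvd p q t"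
  shows "length (filter P smp) \<le> ready_count rcvd smp p pr t"
  unfolding ready_count_def length_filter_conv_card
  using assms by (intro card_mono) auto

lemma length_filter_ge_of_compl:
  assumes "int (length (filter (\<lambda>q. \<not> P q) xs)) \<le> int (length xs) - int k"
  shows "k \<le> length (filter P xs)"
  using assms sum_length_filter_compl[of P xs] by linarith

theorem lemma20:
  fixes Correct :: "'p set"
    and rs ds :: "'p \<Rightarrow> 'p list"
    and sent rcvd :: "'p \<Rightarrow> 'p \<Rightarrow> nat \<Rightarrow> ('m, 's) cmsg set"
    and pcbd :: "'p \<Rightarrow> nat \<Rightarrow> ('m \<times> 's) set"
    and dlv :: "'p \<Rightarrow> nat \<Rightarrow> 'm option"
    and vrf :: "'m \<Rightarrow> 's \<Rightarrow> bool"
    and sign :: "'m \<Rightarrow> 's"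
    and \<sigma> :: 'p and m :: 'm
    and R Rh D Dh :: nat
  assumes net: "network_ok Correct sent rcvd pcbd"
    and proc: "\<forall>p \<in> Correct. contagion_proc R Rh D Dh vrf rs ds sent rcvd pcbd dlv p"
    and sender_correct: "\<sigma> \<in> Correct"
    and sign_ok: "vrf m (sign m)"
    and unforgeable: "\<forall>m' s. vrf m' s \<longrightarrow> m' = m"
    and total_validity: "\<forall>p \<in> Correct. \<exists>t. (m, sign m) \<in> pcbd p t"
    and few_byz: "int (length (filter (\<lambda>q. q \<notin> Correct) (ds \<sigma>))) \<le> int D - int Dh"
  shows "\<exists>t. dlv \<sigma> t = Some m"
proof -
  have proc_\<sigma>: "contagion_proc R Rh D Dh vrf rs ds sent rcvd pcbd dlv \<sigma>"
    using proc sender_correct by (rule bspec)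
  have "\<exists>t. Ready (m, sign m) \<in> rcvd \<sigma> q t" if q: "q \<in> set (ds \<sigma>) \<inter> Correct" for q
  proof -
    obtain t where "(m, sign m) \<in> pcbd q t"
      using total_validity q by blast
    then show ?thesis
      using ready_reaches_sampler[OF net proc sender_correct] q sign_ok by simp
  qed
  then have "\<exists>T. \<forall>q \<in> set (ds \<sigma>) \<inter> Correct. Ready (m, sign m) \<in> rcvd \<sigma> q T"
    using network_ok_rcvd_mono[OF net] by (intro finite_eventually_all) blast+
  then obtain T where "\<forall>q \<in> set (ds \<sigma>) \<inter> Correct. Ready (m, sign m) \<in> rcvd \<sigma> q T" ..
  then have "length (filter (\<lambda>q. q \<in> Correct) (ds \<sigma>)) \<le> ready_count rcvd (ds \<sigma>) \<sigma> (m, sign m) T"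
    by (intro ready_count_ge_length_filter) blast
  moreover have "Dh \<le> length (filter (\<lambda>q. q \<in> Correct) (ds \<sigma>))"
  proof (rule length_filter_ge_of_compl)
    have "length (ds \<sigma>) = D"
      using proc_\<sigma> unfolding contagion_proc_def by meson
    then show "int (length (filter (\<lambda>q. q \<notin> Correct) (ds \<sigma>))) \<le> int (length (ds \<sigma>)) - int Dh"
      using few_byz by simp
  qed
  ultimately obtain x where x: "dlv \<sigma> T = Some x"
    using contagion_proc_delivers_at_threshold[OF proc_\<sigma> sign_ok] by fastforce
  then obtain s where "vrf x s"
    using contagion_proc_delivered_signed[OF proc_\<sigma>] by blast
  with x unforgeable show ?thesis by blast
qed

end
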